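(* Let $k \geq 1$ and let $X \subset S^{\mathbb{Z}^2}$ be a two-dimensional subshift whose language $\mathcal{B}(X)$ (the set of finite patterns occurring in points of $X$) is a $\Pi^0_k$ set. Then the set of finite patterns $P$ with $P \sqsubset X^{(1)}$ is a $\Pi^0_{k+2}$ set.
   Context: A pattern is a pair $(D,s)$ with $D \subset \mathbb{Z}^2$ finite and $s: D \to S$; it occurs in a configuration $x$ if $x$ restricted to $D + \vec n$ equals $P$ (after translation) for some $\vec n$, and $P \sqsubset X$ means it occurs in some point of $X$. A subshift is a closed shift-invariant subset of $S^{\mathbb{Z}^2}$. $X^{(1)}$ is the set of non-isolated points of $X$ (itself a subshift). Sets of patterns are classified in the arithmetical hierarchy via a natural computable bijection with $\mathbb{N}$; $\Pi^0_n$ sets are those definable by formulas with $n$ alternating unbounded quantifier blocks starting with $\forall$ in front of a bounded-quantifier formula. *)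

theory Defs
  imports "HOL-Analysis.Analysis" "HOL-Library.Nat_Bijection"
begin

text \<open>The space (int * int => nat) carries the
library's product topology (nat is discrete), so S^(Z^2) is a closed subspace.\<close>

type_synonym config = "int \<times> int \<Rightarrow> nat"

definition shift :: "int \<times> int \<Rightarrow> config \<Rightarrow> config" where
  "shift v x = (\<lambda>p. x (fst p + fst v, snd p + snd v))"

definition subshift :: "nat set \<Rightarrow> config set \<Rightarrow> bool" where
  "subshift S X \<longleftrightarrow> finite S \<and> X \<subseteq> {x. \<forall>p. x p \<in> S} \<and> closed X
     \<and> (\<forall>x\<in>X. \<forall>v. shift v x \<in> X)"

definition derived :: "config set \<Rightarrow> config set" where
  "derived X = {x \<in> X. x islimpt X}"

text \<open>A pattern (D,s) is a finitely supported partial map: D = dom P, s = the o P.\<close>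
type_synonym pattern = "int \<times> int \<Rightarrow> nat option"

definition is_pattern :: "pattern \<Rightarrow> bool" where
  "is_pattern P \<longleftrightarrow> finite (dom P)"

definition occurs_in :: "pattern \<Rightarrow> config \<Rightarrow> bool" where
  "occurs_in P x \<longleftrightarrow> (\<exists>v. \<forall>p \<in> dom P. P p = Some (x (fst p + fst v, snd p + snd v)))"

definition occurs_in_shift :: "pattern \<Rightarrow> config set \<Rightarrow> bool" where
  "occurs_in_shift P X \<longleftrightarrow> (\<exists>x\<in>X. occurs_in P x)"

definition language :: "config set \<Rightarrow> pattern set" where
  "language X = {P. is_pattern P \<and> occurs_in_shift P X}"

text \<open>A natural number n codes the list list_decode n; each entry e codes a triple
(i,j,c) via prod_decode/int_decode; the pattern is the finite map assigning c to (i,j)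
(first occurrence wins). This is a computable surjection onto all finite patterns.\<close>

definition decode_entry :: "nat \<Rightarrow> (int \<times> int) \<times> nat" where
  "decode_entry e = (let (a, r) = prod_decode e; (b, c) = prod_decode r
                     in ((int_decode a, int_decode b), c))"

definition pattern_of_code :: "nat \<Rightarrow> pattern" where
  "pattern_of_code n = map_of (map decode_entry (list_decode n))"

inductive PR :: "nat \<Rightarrow> (nat list \<Rightarrow> nat) \<Rightarrow> bool" where
  zero: "PR n (\<lambda>_. 0)"
| succ: "PR 1 (\<lambda>xs. Suc (hd xs))"
| proj: "i < n \<Longrightarrow> PR n (\<lambda>xs. xs ! i)"
| comp: "PR m f \<Longrightarrow> length gs = m \<Longrightarrow> (\<forall>g\<in>set gs. PR n g)
         \<Longrightarrow> PR n (\<lambda>xs. f (map (\<lambda>g. g xs) gs))"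
| prim_rec: "PR n f \<Longrightarrow> PR (Suc (Suc n)) g
         \<Longrightarrow> PR (Suc n) (\<lambda>xs. rec_nat (f (tl xs)) (\<lambda>y r. g (y # r # tl xs)) (hd xs))"

fun alt_quant :: "bool \<Rightarrow> nat \<Rightarrow> (nat list \<Rightarrow> bool) \<Rightarrow> nat list \<Rightarrow> bool" where
  "alt_quant _ 0 R ys = R ys"
| "alt_quant True (Suc k) R ys = (\<forall>y. alt_quant False k R (ys @ [y]))"
| "alt_quant False (Suc k) R ys = (\<exists>y. alt_quant True k R (ys @ [y]))"

text \<open>Pi^0_k sets of naturals (Kleene normal form, primitive recursive matrix).\<close>
definition Pi0 :: "nat \<Rightarrow> nat set \<Rightarrow> bool" where
  "Pi0 k A \<longleftrightarrow> (\<exists>f. PR (Suc k) f \<and> (\<forall>x. x \<in> A \<longleftrightarrow> alt_quant True k (\<lambda>ys. f ys \<noteq> 0) [x]))"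

definition Pi0_patterns :: "nat \<Rightarrow> pattern set \<Rightarrow> bool" where
  "Pi0_patterns k A \<longleftrightarrow> Pi0 k {n. pattern_of_code n \<in> A}"

end

theory Submission
  imports Defs
begin

text \<open>
  The proof has a topological and an arithmetical half.  Topologically, a finite pattern
  P occurs in X^(1) iff for every n there are two patterns R1, R2 of the language such that
  R1 extends P, R1 and R2 agree on the n-th box around the origin, and R1 and R2 differ
  somewhere ("limit witnesses", lemma derived_iff_witnesses).  Necessity takes a nearby
  different point of X; sufficiency realises the witnesses as points and uses compactness
  of X.  Arithmetically, being a limit witness is a primitive recursive relation between
  codes of patterns (PRP_witness_code), so occurrence in X^(1) has the form
  "for all n, exists c1 c2: PR relation and c1, c2 in a Pi^0_k set"
  (derived_iff_codes); contracting the two inner Pi^0_k prefixes into one gives a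
  Pi^0_(k+2) definition (Pi0_forall_exists_pair).
\<close>

text \<open>Convergence in the configuration space is pointwise eventual equality, since the
  product topology on config is built from the discrete topology on symbols.\<close>
lemma tendsto_config_iff:
  "((f :: 'b \<Rightarrow> config) \<longlongrightarrow> l) F \<longleftrightarrow> (\<forall>p. eventually (\<lambda>a. f a p = l p) F)"
proof -
  have "((f :: 'b \<Rightarrow> config) \<longlongrightarrow> l) F \<longleftrightarrow> limitin (product_topology (\<lambda>i. euclidean) UNIV) f l F"
    by (simp add: euclidean_product_topology)
  also have "\<dots> \<longleftrightarrow> (\<forall>p. ((\<lambda>a. f a p) \<longlongrightarrow> l p) F)"
    by (subst limitin_componentwise) simp
  also have "\<dots> \<longleftrightarrow> (\<forall>p. eventually (\<lambda>a. f a p = l p) F)"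
    by (simp add: tendsto_discrete)
  finally show ?thesis .
qed

lemma cylinder_open: "finite F \<Longrightarrow> open {y::config. \<forall>p\<in>F. y p = x p}"
  using product_topology_basis'[of F "\<lambda>p. {x p}" "\<lambda>p. p"] by (simp add: open_discrete)

text \<open>A subshift is a closed subset of the compact space S^(Z^2) (Tychonoff),
  hence sequentially compact.\<close>
lemma subshift_seq_compact:
  assumes "subshift S X" shows "seq_compact X"
proof -
  have fin: "finite S" and sub: "X \<subseteq> {x. \<forall>p. x p \<in> S}" and cl: "closed X"
    using assms unfolding subshift_def by auto
  have "compactin (product_topology (\<lambda>i. euclidean) UNIV) (PiE UNIV (\<lambda>_::int\<times>int. S))"
    using fin by (simp add: compactin_PiE finite_imp_compact)
  hence "compact (PiE UNIV (\<lambda>_::int\<times>int. S))"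
    by (simp add: euclidean_product_topology)
  moreover have "PiE UNIV (\<lambda>_::int\<times>int. S) = {x. \<forall>p. x p \<in> S}"
    by (auto simp: PiE_def Pi_def)
  ultimately have "compact {x::config. \<forall>p. x p \<in> S}" by simp
  hence "compact X" using cl sub
    by (metis compact_Int_closed inf.absorb_iff2)
  thus ?thesis by (rule compact_imp_seq_compact)
qed

lemma islimpt_agreeing_point:
  fixes x :: config
  assumes "x islimpt X" "finite F"
  shows "\<exists>y\<in>X. y \<noteq> x \<and> (\<forall>p\<in>F. y p = x p)"
  using assms(1)[unfolded islimpt_def, rule_format, of "{y. \<forall>p\<in>F. y p = x p}"]
    cylinder_open[OF assms(2)] by auto

text \<open>The square windows exhausting the plane, indexed through the enumeration
  int_decode of the integers used by the coding of patterns.\<close>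
definition pos_box :: "nat \<Rightarrow> (int \<times> int) set" where
  "pos_box n = (\<lambda>(a, b). (int_decode a, int_decode b)) ` ({..<n} \<times> {..<n})"

lemma finite_pos_box: "finite (pos_box n)"
  by (simp add: pos_box_def)

lemma ball_pos_box: "(\<forall>p\<in>pos_box n. Q p) \<longleftrightarrow> (\<forall>a<n. \<forall>b<n. Q (int_decode a, int_decode b))"
  by (auto simp: pos_box_def)

lemma eventually_in_pos_box: "\<exists>N. \<forall>n\<ge>N. p \<in> pos_box n"
proof -
  obtain a b where "p = (int_decode a, int_decode b)"
    by (metis int_encode_inverse prod.collapse)
  thus ?thesis by (intro exI[of _ "Suc (max a b)"]) (auto simp: pos_box_def int_decode_eq)
qed

definition limit_witness :: "pattern \<Rightarrow> nat \<Rightarrow> pattern \<Rightarrow> pattern \<Rightarrow> bool" where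
  "limit_witness P n R1 R2 \<longleftrightarrow> P \<subseteq>\<^sub>m R1 \<and>
     (\<forall>p\<in>pos_box n. \<exists>v. R1 p = Some v \<and> R2 p = Some v) \<and>
     (\<exists>p v1 v2. R1 p = Some v1 \<and> R2 p = Some v2 \<and> v1 \<noteq> v2)"

definition window :: "config \<Rightarrow> int \<times> int \<Rightarrow> (int \<times> int) set \<Rightarrow> pattern" where
  "window x v E = (\<lambda>p. if p \<in> E then Some (x (fst p + fst v, snd p + snd v)) else None)"

lemma window_in_language:
  assumes "x \<in> X" "finite E"
  shows "window x v E \<in> language X"
proof -
  have "dom (window x v E) = E" by (auto simp: window_def split: if_splits)
  thus ?thesis using assms
    unfolding language_def is_pattern_def occurs_in_shift_def occurs_in_def
    by (intro CollectI conjI bexI[of _ x] exI[of _ v]) (auto simp: window_def)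
qed

text \<open>By shift invariance, every pattern of the language occurs at the origin of some point.\<close>
lemma language_occurs_at_origin:
  assumes "subshift S X" "R \<in> language X"
  shows "\<exists>y\<in>X. R \<subseteq>\<^sub>m (\<lambda>p. Some (y p))"
proof -
  obtain y w where y: "y \<in> X" and
    occ: "\<forall>p\<in>dom R. R p = Some (y (fst p + fst w, snd p + snd w))"
    using assms(2) unfolding language_def occurs_in_shift_def occurs_in_def by blast
  have "shift w y \<in> X" using assms(1) y unfolding subshift_def by blast
  moreover have "R \<subseteq>\<^sub>m (\<lambda>p. Some (shift w y p))"
    using occ unfolding map_le_def shift_def by simp
  ultimately show ?thesis by blast
qed

text \<open>Necessity: around a non-isolated occurrence of P, a different point of the
  subshift agreeing on a large box yields limit witnesses for every n.\<close>
lemma derived_has_witnesses: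
  assumes "is_pattern P" "x0 \<in> derived X" "occurs_in P x0"
  shows "\<exists>R1\<in>language X. \<exists>R2\<in>language X. limit_witness P n R1 R2"
proof -
  obtain v where v: "\<forall>p\<in>dom P. P p = Some (x0 (fst p + fst v, snd p + snd v))"
    using assms(3) unfolding occurs_in_def by blast
  let ?tr = "\<lambda>p::int\<times>int. (fst p + fst v, snd p + snd v)"
  have x0X: "x0 \<in> X" and lim: "x0 islimpt X" using assms(2) unfolding derived_def by auto
  obtain y where y: "y \<in> X" "y \<noteq> x0" and agree: "\<forall>p\<in>?tr ` pos_box n. y p = x0 p"
    using islimpt_agreeing_point[OF lim] finite_pos_box by blast
  obtain q where q: "y q \<noteq> x0 q" using y(2) by blast
  define q' where "q' = (fst q - fst v, snd q - snd v)"
  define E where "E = pos_box n \<union> dom P \<union> {q'}"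
  have "finite E" using assms(1) finite_pos_box by (simp add: E_def is_pattern_def)
  hence "window x0 v E \<in> language X" "window y v E \<in> language X"
    using x0X y(1) by (simp_all add: window_in_language)
  moreover have "limit_witness P n (window x0 v E) (window y v E)"
    unfolding limit_witness_def
  proof (intro conjI)
    show "P \<subseteq>\<^sub>m window x0 v E" using v unfolding map_le_def window_def E_def by auto
    show "\<forall>p\<in>pos_box n. \<exists>a. window x0 v E p = Some a \<and> window y v E p = Some a"
      using agree unfolding window_def E_def by auto
    show "\<exists>p v1 v2. window x0 v E p = Some v1 \<and> window y v E p = Some v2 \<and> v1 \<noteq> v2"
      using q by (intro exI[of _ q']) (auto simp: window_def E_def q'_def)
  qed
  ultimately show ?thesis by blast
qed

lemma limit_of_separated_pairs:
  fixes Y Z :: "nat \<Rightarrow> config"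
  assumes pts: "\<And>n. Y n \<in> X" "\<And>n. Z n \<in> X" "\<And>n. Y n \<noteq> Z n"
    and agree: "\<And>n p. p \<in> pos_box n \<Longrightarrow> Y n p = Z n p"
    and \<sigma>: "strict_mono \<sigma>" and conv: "((Y \<circ> \<sigma>) \<longlongrightarrow> l) sequentially"
  shows "l islimpt X"
proof -
  define f where "f = (\<lambda>j. if Y (\<sigma> j) \<noteq> l then Y (\<sigma> j) else Z (\<sigma> j))"
  have "f j \<in> X - {l}" for j
    using pts[of "\<sigma> j"] by (auto simp: f_def)
  moreover have "(f \<longlongrightarrow> l) sequentially"
    unfolding tendsto_config_iff
  proof
    fix p
    obtain N where N: "\<forall>n\<ge>N. p \<in> pos_box n" using eventually_in_pos_box by blast
    have "eventually (\<lambda>j. p \<in> pos_box (\<sigma> j)) sequentially"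
      unfolding eventually_sequentially using N seq_suble[OF \<sigma>] by (meson order_trans)
    moreover have "eventually (\<lambda>j. Y (\<sigma> j) p = l p) sequentially"
      using conv unfolding tendsto_config_iff comp_def by (cases p) simp
    ultimately show "eventually (\<lambda>j. f j p = l p) sequentially"
      by eventually_elim (auto simp: f_def agree)
  qed
  ultimately show ?thesis using islimpt_sequential by blast
qed

text \<open>Sufficiency: realise the witnesses as points, extract a convergent subsequence by
  compactness; its limit contains P and is not isolated.\<close>
lemma witnesses_give_derived:
  assumes X: "subshift S X"
    and wit: "\<forall>n. \<exists>R1\<in>language X. \<exists>R2\<in>language X. limit_witness P n R1 R2"
  shows "occurs_in_shift P (derived X)"
proof -
  have "\<forall>n. \<exists>Y\<in>X. \<exists>Z\<in>X. P \<subseteq>\<^sub>m (\<lambda>p. Some (Y p)) \<and> Y \<noteq> Z \<and> (\<forall>p\<in>pos_box n. Y p = Z p)"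
  proof
    fix n
    obtain R1 R2 where R: "R1 \<in> language X" "R2 \<in> language X" "limit_witness P n R1 R2"
      using wit by blast
    obtain Y Z where YZ: "Y \<in> X" "Z \<in> X"
      and Y: "R1 \<subseteq>\<^sub>m (\<lambda>p. Some (Y p))" and Z: "R2 \<subseteq>\<^sub>m (\<lambda>p. Some (Z p))"
      using language_occurs_at_origin[OF X] R(1,2) by metis
    have val: "R1 p = Some a \<Longrightarrow> Y p = a" "R2 p = Some a \<Longrightarrow> Z p = a" for p a
      using Y Z unfolding map_le_def by (metis domI option.inject)+
    have "P \<subseteq>\<^sub>m (\<lambda>p. Some (Y p))"
      using R(3) Y unfolding limit_witness_def by (blast intro: map_le_trans)
    moreover have "Y \<noteq> Z" and "\<forall>p\<in>pos_box n. Y p = Z p"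
      using R(3) unfolding limit_witness_def by (metis val)+
    ultimately show "\<exists>Y\<in>X. \<exists>Z\<in>X. P \<subseteq>\<^sub>m (\<lambda>p. Some (Y p)) \<and> Y \<noteq> Z \<and> (\<forall>p\<in>pos_box n. Y p = Z p)"
      using YZ by blast
  qed
  then obtain Y Z where pts: "\<And>n. Y n \<in> X" "\<And>n. Z n \<in> X" "\<And>n. Y n \<noteq> Z n"
    and PY: "\<And>n. P \<subseteq>\<^sub>m (\<lambda>p. Some (Y n p))" and agree: "\<And>n p. p \<in> pos_box n \<Longrightarrow> Y n p = Z n p"
    by metis
  obtain l \<sigma> where l: "l \<in> X" and \<sigma>: "strict_mono \<sigma>" and conv: "((Y \<circ> \<sigma>) \<longlongrightarrow> l) sequentially"
    using subshift_seq_compact[OF X] pts(1) unfolding seq_compact_def by metis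
  have "l islimpt X" by (rule limit_of_separated_pairs[OF pts agree \<sigma> conv])
  moreover have "P p = Some (l p)" if "p \<in> dom P" for p
  proof -
    obtain j where "Y (\<sigma> j) p = l p"
      using conv unfolding tendsto_config_iff comp_def eventually_sequentially by blast
    thus ?thesis using PY[of "\<sigma> j"] that unfolding map_le_def by simp
  qed
  hence "occurs_in P l" unfolding occurs_in_def by (intro exI[of _ "(0, 0)"]) simp
  ultimately show ?thesis using l unfolding occurs_in_shift_def derived_def by blast
qed

lemma derived_iff_witnesses:
  assumes "subshift S X" "is_pattern P"
  shows "occurs_in_shift P (derived X) \<longleftrightarrow>
    (\<forall>n. \<exists>R1\<in>language X. \<exists>R2\<in>language X. limit_witness P n R1 R2)"
  using derived_has_witnesses[OF assms(2)] witnesses_give_derived[OF assms(1)]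
  unfolding occurs_in_shift_def by blast



text \<open>Primitive recursive functions up to extensional equality on argument lists of the
  right length: this quotient is what the closure properties below need.\<close>
definition PRf :: "nat \<Rightarrow> (nat list \<Rightarrow> nat) \<Rightarrow> bool" where
  "PRf n g \<longleftrightarrow> (\<exists>f. PR n f \<and> (\<forall>xs. length xs = n \<longrightarrow> f xs = g xs))"

lemma PR_PRf: "PR n f \<Longrightarrow> PRf n f"
  unfolding PRf_def by blast

lemma PRf_cong: "PRf n f \<Longrightarrow> (\<And>xs. length xs = n \<Longrightarrow> f xs = g xs) \<Longrightarrow> PRf n g"
  unfolding PRf_def by metis

lemma PRf_list_choose:
  assumes "\<forall>g\<in>set gs. PRf n g"
  shows "\<exists>gs'. length gs' = length gs \<and> (\<forall>g\<in>set gs'. PR n g) \<and>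
     (\<forall>xs. length xs = n \<longrightarrow> map (\<lambda>g. g xs) gs' = map (\<lambda>g. g xs) gs)"
  using assms
proof (induction gs)
  case Nil then show ?case by auto
next
  case (Cons g gs)
  then obtain gs' where gs': "length gs' = length gs" "\<forall>g\<in>set gs'. PR n g"
     "\<forall>xs. length xs = n \<longrightarrow> map (\<lambda>g. g xs) gs' = map (\<lambda>g. g xs) gs" by auto
  from Cons.prems obtain g' where "PR n g'" "\<forall>xs. length xs = n \<longrightarrow> g' xs = g xs"
    unfolding PRf_def by auto
  then show ?case using gs' by (intro exI[of _ "g'#gs'"]) auto
qed

lemma PRf_comp:
  assumes "PRf m f" "length gs = m" "\<forall>g\<in>set gs. PRf n g"
  shows "PRf n (\<lambda>xs. f (map (\<lambda>g. g xs) gs))"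
proof -
  obtain f' where f': "PR m f'" "\<forall>xs. length xs = m \<longrightarrow> f' xs = f xs"
    using assms(1) unfolding PRf_def by auto
  obtain gs' where gs': "length gs' = length gs" "\<forall>g\<in>set gs'. PR n g"
     "\<forall>xs. length xs = n \<longrightarrow> map (\<lambda>g. g xs) gs' = map (\<lambda>g. g xs) gs"
    using PRf_list_choose[OF assms(3)] by auto
  have "PR n (\<lambda>xs. f' (map (\<lambda>g. g xs) gs'))"
    using f'(1) gs' assms(2) by (intro PR.comp) auto
  moreover have "f' (map (\<lambda>g. g xs) gs') = f (map (\<lambda>g. g xs) gs)" if "length xs = n" for xs
    using that gs' f' assms(2) by simp
  ultimately show ?thesis unfolding PRf_def by blast
qed

lemma PRf_rec:
  assumes A: "PRf n A" and B: "PRf (Suc (Suc n)) B" and C: "PRf n C"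
  shows "PRf n (\<lambda>xs. rec_nat (A xs) (\<lambda>y r. B (y # r # xs)) (C xs))"
proof -
  obtain fA where fA: "PR n fA" "\<forall>xs. length xs = n \<longrightarrow> fA xs = A xs"
    using A unfolding PRf_def by auto
  obtain fB where fB: "PR (Suc (Suc n)) fB" "\<forall>xs. length xs = Suc (Suc n) \<longrightarrow> fB xs = B xs"
    using B unfolding PRf_def by auto
  define H where "H = (\<lambda>xs. rec_nat (fA (tl xs)) (\<lambda>y r. fB (y # r # tl xs)) (hd xs))"
  have "PR (Suc n) H" unfolding H_def using fA fB by (intro PR.prim_rec)
  hence H: "PRf (Suc n) H" by (rule PR_PRf)
  have gs: "\<forall>g\<in>set (C # map (\<lambda>j ys. ys ! j) [0..<n]). PRf n g"
    using C by (auto intro!: PR_PRf intro: PR.proj)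
  have "PRf n (\<lambda>xs. H (map (\<lambda>g. g xs) (C # map (\<lambda>j ys. ys ! j) [0..<n])))"
    by (rule PRf_comp[OF H _ gs]) simp
  moreover have "H (map (\<lambda>g. g xs) (C # map (\<lambda>j ys. ys ! j) [0..<n])) =
      rec_nat (A xs) (\<lambda>y r. B (y # r # xs)) (C xs)" if "length xs = n" for xs
  proof -
    have m: "map (\<lambda>g. g xs) (map (\<lambda>j ys. ys ! j) [0..<n]) = xs"
      using that by (simp add: comp_def) (metis map_nth)
    have "(\<lambda>y r. fB (y # r # xs)) = (\<lambda>y r. B (y # r # xs))"
      using fB that by auto
    then show ?thesis using m fA that by (simp add: H_def)
  qed
  ultimately show ?thesis by (rule PRf_cong)
qed

text \<open>Working with environments instead of argument
  lists lets us write primitive recursive terms as ordinary HOL lambda terms.\<close>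
definition env_local :: "nat \<Rightarrow> ((nat \<Rightarrow> nat) \<Rightarrow> 'a) \<Rightarrow> bool" where
  "env_local n g \<longleftrightarrow> (\<forall>e e'. (\<forall>i<n. e i = e' i) \<longrightarrow> g e = g e')"

definition PRe :: "nat \<Rightarrow> ((nat \<Rightarrow> nat) \<Rightarrow> nat) \<Rightarrow> bool" where
  "PRe n g \<longleftrightarrow> env_local n g \<and> PRf n (\<lambda>xs. g (nth xs))"

lemma PRe_var: "i < n \<Longrightarrow> PRe n (\<lambda>e. e i)"
  unfolding PRe_def env_local_def using PR_PRf[OF PR.proj] by simp

lemma PRe_zero: "PRe n (\<lambda>e. 0)"
  unfolding PRe_def env_local_def using PR_PRf[OF PR.zero] by simp

lemma PRe_subst:
  assumes g: "PRe m g" and s: "\<And>i. i < m \<Longrightarrow> PRe n (s i)"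
  shows "PRe n (\<lambda>e. g (\<lambda>i. s i e))"
proof -
  have lg: "env_local m g" and pg: "PRf m (\<lambda>xs. g (nth xs))" using g unfolding PRe_def by auto
  have ls: "env_local n (s i)" and ps: "PRf n (\<lambda>xs. s i (nth xs))" if "i < m" for i
    using s[OF that] unfolding PRe_def by auto
  have "PRf n (\<lambda>xs. (\<lambda>xs. g (nth xs)) (map (\<lambda>g. g xs) (map (\<lambda>i xs. s i (nth xs)) [0..<m])))"
    using pg ps by (intro PRf_comp) auto
  moreover have "(\<lambda>xs. g (nth xs)) (map (\<lambda>g. g xs) (map (\<lambda>i xs. s i (nth xs)) [0..<m]))
      = g (\<lambda>i. s i (nth xs))" for xs
    by (rule lg[unfolded env_local_def, rule_format]) simp
  ultimately have "PRf n (\<lambda>xs. g (\<lambda>i. s i (nth xs)))" by simp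
  moreover have "env_local n (\<lambda>e. g (\<lambda>i. s i e))"
    unfolding env_local_def
  proof (intro allI impI)
    fix e e' :: "nat \<Rightarrow> nat" assume "\<forall>i<n. e i = e' i"
    hence H: "\<forall>i<m. s i e = s i e'" using ls unfolding env_local_def by simp
    show "g (\<lambda>i. s i e) = g (\<lambda>i. s i e')" by (rule lg[unfolded env_local_def, rule_format]) (simp add: H)
  qed
  ultimately show ?thesis unfolding PRe_def by simp
qed

lemma PRe_Suc: assumes "PRe n a" shows "PRe n (\<lambda>e. Suc (a e))"
proof -
  have "PRf (Suc 0) (\<lambda>xs. Suc (xs ! 0))"
    by (rule PRf_cong[OF PR_PRf[OF PR.succ[simplified]]]) (case_tac xs; auto)
  moreover have "env_local (Suc 0) (\<lambda>e. Suc (e 0))" unfolding env_local_def by auto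
  ultimately have "PRe (Suc 0) (\<lambda>e. Suc (e 0))" unfolding PRe_def by simp
  from PRe_subst[OF this, where s="\<lambda>i. a"] assms show ?thesis by simp
qed

lemma PRe_const: "PRe n (\<lambda>e. c)"
  by (induction c) (simp_all add: PRe_zero PRe_Suc)

text \<open>Primitive recursion on the value of a term; the step function may read the iteration
  counter (variable 0), the previous value (variable 1) and the outer environment.\<close>
lemma PRe_rec:
  assumes "PRe n A" "PRe (Suc (Suc n)) (\<lambda>e. G (e 0) (e 1) (\<lambda>j. e (Suc (Suc j))))" "PRe n C"
  shows "PRe n (\<lambda>e. rec_nat (A e) (\<lambda>y r. G y r e) (C e))"
proof -
  have "PRf n (\<lambda>xs. rec_nat (A (nth xs)) (\<lambda>y r. (\<lambda>ys. G (ys!0) (ys!1) (\<lambda>j. ys ! Suc (Suc j))) (y # r # xs)) (C (nth xs)))"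
    using assms unfolding PRe_def by (intro PRf_rec) auto
  moreover have "(\<lambda>j. (y # r # xs) ! Suc (Suc j)) = nth xs" for y r xs
    by auto
  ultimately have rec: "PRf n (\<lambda>xs. rec_nat (A (nth xs)) (\<lambda>y r. G y r (nth xs)) (C (nth xs)))" by simp
  have lA: "env_local n A" and lC: "env_local n C" and lG: "env_local (Suc (Suc n)) (\<lambda>e. G (e 0) (e 1) (\<lambda>j. e (Suc (Suc j))))"
    using assms unfolding PRe_def by auto
  have Gl: "G y r e = G y r e'" if "\<forall>i<n. e i = e' i" for y r e e'
  proof -
    have "(\<lambda>e. G (e 0) (e 1) (\<lambda>j. e (Suc (Suc j)))) (case_nat y (case_nat r e)) =
          (\<lambda>e. G (e 0) (e 1) (\<lambda>j. e (Suc (Suc j)))) (case_nat y (case_nat r e'))"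
      by (rule lG[unfolded env_local_def, rule_format]) (use that in \<open>auto split: nat.split\<close>)
    thus ?thesis by simp
  qed
  have "env_local n (\<lambda>e. rec_nat (A e) (\<lambda>y r. G y r e) (C e))"
    unfolding env_local_def
  proof (intro allI impI)
    fix e e' :: "nat \<Rightarrow> nat" assume h: "\<forall>i<n. e i = e' i"
    have "A e = A e'" using lA h unfolding env_local_def by simp
    moreover have "C e = C e'" using lC h unfolding env_local_def by simp
    moreover have "(\<lambda>y r. G y r e) = (\<lambda>y r. G y r e')" using Gl[OF h] by simp
    ultimately show "rec_nat (A e) (\<lambda>y r. G y r e) (C e) = rec_nat (A e') (\<lambda>y r. G y r e') (C e')"
      by simp
  qed
  with rec show ?thesis unfolding PRe_def by simp
qed

lemma PRe_comp_list:
  assumes "PRf m f" "length gs = m" "\<forall>g\<in>set gs. PRe n g"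
  shows "PRe n (\<lambda>e. f (map (\<lambda>g. g e) gs))"
proof -
  have "PRf n (\<lambda>xs. f (map (\<lambda>g. g xs) (map (\<lambda>g xs. g (nth xs)) gs)))"
    using assms unfolding PRe_def by (intro PRf_comp) auto
  moreover have "env_local n (\<lambda>e. f (map (\<lambda>g. g e) gs))"
    unfolding env_local_def
  proof (intro allI impI)
    fix e e' :: "nat \<Rightarrow> nat" assume h: "\<forall>i<n. e i = e' i"
    have "\<forall>g\<in>set gs. g e = g e'" using assms(3) h unfolding PRe_def env_local_def by simp
    hence "map (\<lambda>g. g e) gs = map (\<lambda>g. g e') gs" by (simp only: map_eq_conv)
    thus "f (map (\<lambda>g. g e) gs) = f (map (\<lambda>g. g e') gs)" by (rule arg_cong[where f=f])
  qed
  ultimately show ?thesis unfolding PRe_def by (simp add: comp_def)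
qed

lemma PRe_comp2:
  assumes "PRe (Suc (Suc 0)) (\<lambda>e. h (e 0) (e 1))" "PRe n a" "PRe n b"
  shows "PRe n (\<lambda>e. h (a e) (b e))"
proof -
  have "PRf (Suc (Suc 0)) (\<lambda>xs. h (xs ! 0) (xs ! 1))"
    using assms(1) unfolding PRe_def by simp
  hence "PRe n (\<lambda>e. (\<lambda>xs. h (xs ! 0) (xs ! 1)) (map (\<lambda>g. g e) [a, b]))"
    using assms(2,3) by (intro PRe_comp_list) auto
  thus ?thesis by simp
qed

lemma PRe_add: assumes "PRe n a" "PRe n b" shows "PRe n (\<lambda>e. a e + b e)"
proof -
  have "PRe (Suc (Suc 0)) (\<lambda>e. rec_nat (e 1) (\<lambda>y r. (\<lambda>y r e. Suc r) y r e) (e 0))"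
    by (rule PRe_rec; (intro PRe_var PRe_Suc)?; simp)
  moreover have "rec_nat (b::nat) (\<lambda>y r. Suc r) a = a + b" for a b
    by (induction a) auto
  ultimately have "PRe (Suc (Suc 0)) (\<lambda>e. e 0 + e 1)" by simp
  thus ?thesis using assms by (rule PRe_comp2)
qed

lemma PRe_mult: assumes "PRe n a" "PRe n b" shows "PRe n (\<lambda>e. a e * b e)"
proof -
  have "PRe (Suc (Suc 0)) (\<lambda>e. rec_nat 0 (\<lambda>y r. (\<lambda>y r e. r + e 1) y r e) (e 0))"
    by (rule PRe_rec; (intro PRe_var PRe_add PRe_zero)?; simp)
  moreover have "rec_nat 0 (\<lambda>y r. r + b) a = a * (b::nat)" for a b
    by (induction a) auto
  ultimately have "PRe (Suc (Suc 0)) (\<lambda>e. e 0 * e 1)" by simp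
  thus ?thesis using assms by (rule PRe_comp2)
qed

lemma PRe_pred: assumes "PRe n a" shows "PRe n (\<lambda>e. a e - 1)"
proof -
  have "PRe n (\<lambda>e. rec_nat 0 (\<lambda>y r. (\<lambda>y r e. y) y r e) (a e))"
    using assms by (intro PRe_rec; (intro PRe_var PRe_zero)?; simp)
  moreover have "rec_nat 0 (\<lambda>y r. y) a = a - (1::nat)" for a
    by (cases a) auto
  ultimately show ?thesis by simp
qed

lemma PRe_minus: assumes "PRe n a" "PRe n b" shows "PRe n (\<lambda>e. a e - b e)"
proof -
  have "PRe (Suc (Suc 0)) (\<lambda>e. rec_nat (e 0) (\<lambda>y r. (\<lambda>y r e. r - 1) y r e) (e 1))"
    by (rule PRe_rec; (intro PRe_var PRe_pred)?; simp)
  moreover have "rec_nat a (\<lambda>y r. r - 1) b = a - (b::nat)" for a b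
    by (induction b) auto
  ultimately have "PRe (Suc (Suc 0)) (\<lambda>e. e 0 - e 1)" by simp
  thus ?thesis using assms by (rule PRe_comp2)
qed

text \<open>Bounded sums, the source of bounded quantification below.\<close>
lemma PRe_sum:
  assumes F: "PRe (Suc n) (\<lambda>e. F (e 0) (\<lambda>j. e (Suc j)))" and B: "PRe n B"
  shows "PRe n (\<lambda>e. \<Sum>i<B e. F i e)"
proof -
  have "PRe n (\<lambda>e. rec_nat 0 (\<lambda>y r. (\<lambda>y r e. r + F y e) y r e) (B e))"
  proof (rule PRe_rec[OF PRe_zero _ B])
    have "PRe (Suc (Suc n)) (\<lambda>e. (\<lambda>e. F (e 0) (\<lambda>j. e (Suc j))) (\<lambda>i. (\<lambda>i e. if i = 0 then e 0 else e (Suc i)) i e))"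
      by (rule PRe_subst[OF F]) (case_tac "i = 0"; simp; rule PRe_var; simp)
    hence "PRe (Suc (Suc n)) (\<lambda>e. F (e 0) (\<lambda>j. e (Suc (Suc j))))" by simp
    thus "PRe (Suc (Suc n)) (\<lambda>e. e 1 + F (e 0) (\<lambda>j. e (Suc (Suc j))))"
      by (intro PRe_add PRe_var) auto
  qed
  moreover have "rec_nat 0 (\<lambda>y r. r + F y e) b = (\<Sum>i<b. F i e)" for b e
    by (induction b) auto
  ultimately show ?thesis by simp
qed

definition PRP :: "nat \<Rightarrow> ((nat \<Rightarrow> nat) \<Rightarrow> bool) \<Rightarrow> bool" where
  "PRP n P \<longleftrightarrow> PRe n (\<lambda>e. if P e then 1 else 0)"

lemma PRP_eq: assumes "PRe n a" "PRe n b" shows "PRP n (\<lambda>e. a e = b e)"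
proof -
  have "PRe n (\<lambda>e. 1 - ((a e - b e) + (b e - a e)))"
    using assms by (intro PRe_minus PRe_add PRe_const)
  moreover have "(1::nat) - ((x - y) + (y - x)) = (if x = y then 1 else 0)" for x y :: nat
    by auto
  ultimately show ?thesis unfolding PRP_def by simp
qed

lemma PRP_less: assumes "PRe n a" "PRe n b" shows "PRP n (\<lambda>e. a e < b e)"
proof -
  have "PRe n (\<lambda>e. 1 - (Suc (a e) - b e))"
    using assms by (intro PRe_minus PRe_Suc PRe_const)
  moreover have "(1::nat) - (Suc x - y) = (if x < y then 1 else 0)" for x y :: nat
    by auto
  ultimately show ?thesis unfolding PRP_def by simp
qed

lemma PRP_not: assumes "PRP n P" shows "PRP n (\<lambda>e. \<not> P e)"
proof -
  have "PRe n (\<lambda>e. 1 - (if P e then 1 else 0))"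
    using assms unfolding PRP_def by (intro PRe_minus PRe_const)
  moreover have "(\<lambda>e. 1 - (if P e then 1 else 0)) = (\<lambda>e. if \<not> P e then 1 else (0::nat))"
    by auto
  ultimately show ?thesis unfolding PRP_def by simp
qed

lemma PRP_and: assumes "PRP n P" "PRP n Q" shows "PRP n (\<lambda>e. P e \<and> Q e)"
proof -
  have "PRe n (\<lambda>e. (if P e then 1 else 0) * (if Q e then 1 else 0))"
    using assms unfolding PRP_def by (intro PRe_mult)
  moreover have "(\<lambda>e. (if P e then 1 else 0) * (if Q e then 1 else 0)) = (\<lambda>e. if P e \<and> Q e then 1 else (0::nat))"
    by auto
  ultimately show ?thesis unfolding PRP_def by simp
qed

lemma PRP_or: assumes "PRP n P" "PRP n Q" shows "PRP n (\<lambda>e. P e \<or> Q e)"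
proof -
  have "PRP n (\<lambda>e. \<not> (\<not> P e \<and> \<not> Q e))"
    using assms by (intro PRP_not PRP_and)
  thus ?thesis by simp
qed

lemma PRP_imp: assumes "PRP n P" "PRP n Q" shows "PRP n (\<lambda>e. P e \<longrightarrow> Q e)"
proof -
  have "PRP n (\<lambda>e. \<not> P e \<or> Q e)"
    using assms by (intro PRP_not PRP_or)
  thus ?thesis by simp
qed

lemma PRP_ex:
  assumes "PRP (Suc n) (\<lambda>e. P (e 0) (\<lambda>j. e (Suc j)))" "PRe n B"
  shows "PRP n (\<lambda>e. \<exists>i. i < B e \<and> P i e)"
proof -
  have "PRe n (\<lambda>e. 1 - (1 - (\<Sum>i<B e. (\<lambda>i e. if P i e then 1 else 0) i e)))"
    using assms unfolding PRP_def by (intro PRe_minus PRe_const PRe_sum) auto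
  moreover have "(1::nat) - (1 - (\<Sum>i<b. if P i e then 1 else 0)) = (if \<exists>i<b. P i e then 1 else 0)" for b e
  proof (cases "\<exists>i<b. P i e")
    case True
    then obtain i where i: "i < b" "P i e" by auto
    have "(1::nat) \<le> (\<Sum>i<b. if P i e then 1 else 0)"
      using i by (intro order_trans[OF _ member_le_sum[of i]]) auto
    then show ?thesis using True by simp
  next
    case False then show ?thesis by simp
  qed
  ultimately show ?thesis unfolding PRP_def by simp
qed

lemma PRP_all:
  assumes "PRP (Suc n) (\<lambda>e. P (e 0) (\<lambda>j. e (Suc j)))" "PRe n B"
  shows "PRP n (\<lambda>e. \<forall>i. i < B e \<longrightarrow> P i e)"
proof -
  have "PRP n (\<lambda>e. \<not> (\<exists>i. i < B e \<and> \<not> P i e))"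
    using assms by (intro PRP_not PRP_ex) 
  thus ?thesis by simp
qed

lemma PRe_if: assumes "PRP n P" "PRe n a" "PRe n b"
  shows "PRe n (\<lambda>e. if P e then a e else b e)"
proof -
  have "PRe n (\<lambda>e. (if P e then 1 else 0) * a e + (1 - (if P e then 1 else 0)) * b e)"
    using assms unfolding PRP_def by (intro PRe_add PRe_mult PRe_minus PRe_const)
  moreover have "(\<lambda>e. (if P e then 1 else 0) * a e + (1 - (if P e then 1 else 0)) * b e) = (\<lambda>e. if P e then a e else b e)"
    by auto
  ultimately show ?thesis by simp
qed

text \<open>Cantor pairing and its inverse, used both for the coding of patterns and for
  contracting blocks of like quantifiers.\<close>
lemma PRe_triangle: assumes "PRe n a" shows "PRe n (\<lambda>e. triangle (a e))"
proof -
  have "PRe n (\<lambda>e. rec_nat 0 (\<lambda>y r. (\<lambda>y r e. r + Suc y) y r e) (a e))"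
    using assms by (intro PRe_rec PRe_zero PRe_add PRe_Suc PRe_var) simp_all
  moreover have "rec_nat 0 (\<lambda>y r. r + Suc y) x = triangle x" for x
    by (induction x) auto
  ultimately show ?thesis by simp
qed

lemma PRe_prod_encode: assumes "PRe n a" "PRe n b" shows "PRe n (\<lambda>e. prod_encode (a e, b e))"
proof -
  have "PRe n (\<lambda>e. triangle (a e + b e) + a e)"
    using assms by (intro PRe_add PRe_triangle)
  thus ?thesis by (simp add: prod_encode_def)
qed

text \<open>The projections of the inverse pairing as bounded sums: only the unique pair
  with code m contributes.\<close>
lemma prod_decode_as_sum:
  "(\<Sum>x<Suc m. \<Sum>y<Suc m. if prod_encode (x, y) = m then x else 0) = fst (prod_decode m)"
  "(\<Sum>x<Suc m. \<Sum>y<Suc m. if prod_encode (x, y) = m then y else 0) = snd (prod_decode m)"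
proof -
  obtain x0 y0 where d: "prod_decode m = (x0, y0)" by (cases "prod_decode m")
  hence m: "m = prod_encode (x0, y0)" by (metis prod_decode_inverse)
  have b: "x0 < Suc m" "y0 < Suc m" using m le_prod_encode_1 le_prod_encode_2
    by (metis le_imp_less_Suc)+
  have c: "(prod_encode (x, y) = m) \<longleftrightarrow> x = x0 \<and> y = y0" for x y
    using m by simp
  have "(\<Sum>x<Suc m. \<Sum>y<Suc m. if prod_encode (x, y) = m then x else 0)
      = (\<Sum>x<Suc m. if x = x0 then (\<Sum>y<Suc m. if y = y0 then x else 0) else 0)"
    unfolding c by (intro sum.cong) auto
  also have "\<dots> = x0" using b by (simp add: sum.delta)
  finally show "(\<Sum>x<Suc m. \<Sum>y<Suc m. if prod_encode (x, y) = m then x else 0) = fst (prod_decode m)"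
    using d by simp
  have "(\<Sum>x<Suc m. \<Sum>y<Suc m. if prod_encode (x, y) = m then y else 0)
      = (\<Sum>x<Suc m. if x = x0 then (\<Sum>y<Suc m. if y = y0 then y else 0) else 0)"
    unfolding c by (intro sum.cong) auto
  also have "\<dots> = y0" using b by (simp add: sum.delta)
  finally show "(\<Sum>x<Suc m. \<Sum>y<Suc m. if prod_encode (x, y) = m then y else 0) = snd (prod_decode m)"
    using d by simp
qed

lemma PRe_prod_decode_var:
  "PRe (Suc 0) (\<lambda>e. fst (prod_decode (e 0)))" "PRe (Suc 0) (\<lambda>e. snd (prod_decode (e 0)))"
proof -
  have "PRe (Suc 0) (\<lambda>e. \<Sum>x<Suc (e 0). \<Sum>y<Suc (e 0). if prod_encode (x, y) = e 0 then x else 0)"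
    by (intro PRe_sum PRe_if PRP_eq PRe_prod_encode PRe_var PRe_Suc PRe_zero) simp_all
  thus "PRe (Suc 0) (\<lambda>e. fst (prod_decode (e 0)))" by (simp only: prod_decode_as_sum)
  have "PRe (Suc 0) (\<lambda>e. \<Sum>x<Suc (e 0). \<Sum>y<Suc (e 0). if prod_encode (x, y) = e 0 then y else 0)"
    by (intro PRe_sum PRe_if PRP_eq PRe_prod_encode PRe_var PRe_Suc PRe_zero) simp_all
  thus "PRe (Suc 0) (\<lambda>e. snd (prod_decode (e 0)))" by (simp only: prod_decode_as_sum)
qed

lemma PRe_prod_decode:
  assumes "PRe n a"
  shows "PRe n (\<lambda>e. fst (prod_decode (a e)))" "PRe n (\<lambda>e. snd (prod_decode (a e)))"
  using PRe_subst[OF PRe_prod_decode_var(1), where s="\<lambda>i. a"] PRe_subst[OF PRe_prod_decode_var(2), where s="\<lambda>i. a"] assms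
  by simp_all

lemma PRe_weaken: "PRe m g \<Longrightarrow> m \<le> n \<Longrightarrow> PRe n g"
  using PRe_subst[of m g n "\<lambda>i e. e i"] PRe_var by force



text \<open>A code c denotes the list list_decode c of entries; by definition of the coding
  list_decode 0 = [] and list_decode (Suc m) is the pair prod_decode m of head and tail
  code.\<close>

definition code_tl :: "nat \<Rightarrow> nat" where
  "code_tl c = snd (prod_decode (c - 1))"

definition code_hd :: "nat \<Rightarrow> nat" where
  "code_hd c = fst (prod_decode (c - 1))"

definition code_drop :: "nat \<Rightarrow> nat \<Rightarrow> nat" where
  "code_drop i c = rec_nat c (\<lambda>_ r. code_tl r) i"

definition code_nth :: "nat \<Rightarrow> nat \<Rightarrow> nat" where
  "code_nth c i = code_hd (code_drop i c)"

definition entry_x :: "nat \<Rightarrow> nat" where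
  "entry_x d = fst (prod_decode d)"

definition entry_y :: "nat \<Rightarrow> nat" where
  "entry_y d = fst (prod_decode (snd (prod_decode d)))"

definition entry_sym :: "nat \<Rightarrow> nat" where
  "entry_sym d = snd (prod_decode (snd (prod_decode d)))"

definition entry_pos :: "nat \<Rightarrow> int \<times> int" where
  "entry_pos d = (int_decode (entry_x d), int_decode (entry_y d))"

definition same_pos :: "nat \<Rightarrow> nat \<Rightarrow> bool" where
  "same_pos d d' \<longleftrightarrow> entry_x d = entry_x d' \<and> entry_y d = entry_y d'"

lemma PRe_code_tl: "PRe n a \<Longrightarrow> PRe n (\<lambda>e. code_tl (a e))"
  unfolding code_tl_def by (intro PRe_prod_decode PRe_pred)

lemma PRe_code_hd: "PRe n a \<Longrightarrow> PRe n (\<lambda>e. code_hd (a e))"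
  unfolding code_hd_def by (intro PRe_prod_decode PRe_pred)

lemma PRe_code_drop:
  assumes "PRe n a" "PRe n b"
  shows "PRe n (\<lambda>e. code_drop (a e) (b e))"
proof -
  have "PRe n (\<lambda>e. rec_nat (b e) (\<lambda>y r. (\<lambda>y r e. code_tl r) y r e) (a e))"
    using assms by (intro PRe_rec PRe_code_tl PRe_var) simp_all
  thus ?thesis unfolding code_drop_def by simp
qed

lemma PRe_code_nth: "PRe n a \<Longrightarrow> PRe n b \<Longrightarrow> PRe n (\<lambda>e. code_nth (a e) (b e))"
  unfolding code_nth_def by (intro PRe_code_hd PRe_code_drop)

lemma PRe_entry_x: "PRe n a \<Longrightarrow> PRe n (\<lambda>e. entry_x (a e))"
  unfolding entry_x_def by (intro PRe_prod_decode)

lemma PRe_entry_y: "PRe n a \<Longrightarrow> PRe n (\<lambda>e. entry_y (a e))"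
  unfolding entry_y_def by (intro PRe_prod_decode)

lemma PRe_entry_sym: "PRe n a \<Longrightarrow> PRe n (\<lambda>e. entry_sym (a e))"
  unfolding entry_sym_def by (intro PRe_prod_decode)

lemma list_decode_code_tl: "list_decode (code_tl d) = tl (list_decode d)"
proof (cases d)
  case 0 then show ?thesis by (simp add: code_tl_def prod_decode_def prod_decode_aux.simps)
next
  case (Suc n) then show ?thesis by (simp add: code_tl_def split: prod.split)
qed

lemma list_decode_code_drop: "list_decode (code_drop i c) = drop i (list_decode c)"
  by (induction i) (simp_all add: code_drop_def list_decode_code_tl drop_Suc tl_drop)

lemma code_drop_nonzero: "code_drop i c \<noteq> 0 \<longleftrightarrow> i < length (list_decode c)"
proof -
  have "list_decode d = [] \<longleftrightarrow> d = 0" for d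
    by (cases d) (auto split: prod.split)
  thus ?thesis using list_decode_code_drop[of i c] by (metis drop_eq_Nil linorder_not_le)
qed

lemma code_nth_eq_nth: "i < length (list_decode c) \<Longrightarrow> code_nth c i = list_decode c ! i"
proof -
  have hd: "d \<noteq> 0 \<Longrightarrow> code_hd d = hd (list_decode d)" for d
    by (cases d) (auto simp: code_hd_def split: prod.split)
  assume "i < length (list_decode c)"
  thus ?thesis using code_drop_nonzero[of i c]
    by (simp add: code_nth_def hd list_decode_code_drop hd_drop_conv_nth)
qed

text \<open>A code is at least as long as the list it denotes; hence quantifiers over the
  entries of a code can be bounded by the code itself.\<close>
lemma length_list_decode_le: "length (list_decode c) \<le> c"
proof (induction c rule: list_decode.induct)
  case (2 n)
  obtain x y where d: "prod_decode n = (x, y)" by (cases "prod_decode n")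
  have "y \<le> n" using d le_prod_encode_2 by (metis prod_decode_inverse)
  with 2 d show ?case by simp
qed simp

lemma code_all_entries:
  "(\<forall>t. t < c \<longrightarrow> code_drop t c \<noteq> 0 \<longrightarrow> P t) \<longleftrightarrow> (\<forall>t < length (list_decode c). P t)"
  using length_list_decode_le[of c] code_drop_nonzero[of _ c] by (meson less_le_trans)

lemma code_ex_entry:
  "(\<exists>t. t < c \<and> code_drop t c \<noteq> 0 \<and> P t) \<longleftrightarrow> (\<exists>t < length (list_decode c). P t)"
  using length_list_decode_le[of c] code_drop_nonzero[of _ c] by (meson less_le_trans)

lemma decode_entry_eq: "decode_entry d = (entry_pos d, entry_sym d)"
  by (simp add: decode_entry_def entry_pos_def entry_x_def entry_y_def entry_sym_def split: prod.split)

lemma same_pos_iff: "same_pos d d' \<longleftrightarrow> entry_pos d = entry_pos d'"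
  by (simp add: same_pos_def entry_pos_def int_decode_eq)

lemma decode_entry_inj: "decode_entry d = decode_entry d' \<longleftrightarrow> d = d'"
proof
  have rebuild: "d = prod_encode (entry_x d, prod_encode (entry_y d, entry_sym d))" for d
    by (simp add: entry_x_def entry_y_def entry_sym_def)
  assume "decode_entry d = decode_entry d'"
  hence "entry_x d = entry_x d'" "entry_y d = entry_y d'" "entry_sym d = entry_sym d'"
    by (auto simp: decode_entry_eq entry_pos_def int_decode_eq)
  thus "d = d'" by (metis rebuild)
qed simp

lemma map_of_eq_Some_first:
  "map_of xs k = Some v \<longleftrightarrow> (\<exists>i<length xs. xs ! i = (k, v) \<and> (\<forall>j<i. fst (xs ! j) \<noteq> k))"
proof (induction xs)
  case (Cons a xs)
  show ?case
  proof (cases "fst a = k")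
    case True
    then show ?thesis by (cases a) (auto intro!: exI[of _ 0] elim!: allE[of _ 0])
  next
    case False
    have "(\<exists>i<length (a # xs). (a # xs) ! i = (k, v) \<and> (\<forall>j<i. fst ((a # xs) ! j) \<noteq> k))
       \<longleftrightarrow> (\<exists>i<length xs. xs ! i = (k, v) \<and> (\<forall>j<i. fst (xs ! j) \<noteq> k))"
      using False by (auto simp: Ex_less_Suc2 All_less_Suc2)
    then show ?thesis using False Cons.IH by (cases a) auto
  qed
qed simp

lemma pattern_of_code_first:
  "pattern_of_code c k = Some v \<longleftrightarrow> (\<exists>i<length (list_decode c).
     decode_entry (list_decode c ! i) = (k, v) \<and> (\<forall>j<i. entry_pos (list_decode c ! j) \<noteq> k))"
  unfolding pattern_of_code_def map_of_eq_Some_first length_map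
  by (intro ex_cong1 conj_cong refl) (simp_all add: decode_entry_eq)

lemma is_pattern_of_code: "is_pattern (pattern_of_code c)"
  by (simp add: is_pattern_def pattern_of_code_def finite_dom_map_of)

text \<open>Codes without repeated positions; for them the denoted pattern is simply the set of
  decoded entries.  The definition only uses quantifiers bounded by the code.\<close>
definition code_distinct :: "nat \<Rightarrow> bool" where
  "code_distinct c \<longleftrightarrow> (\<forall>t. t < c \<longrightarrow> code_drop t c \<noteq> 0 \<longrightarrow>
     (\<forall>t'. t' < t \<longrightarrow> \<not> same_pos (code_nth c t') (code_nth c t)))"

lemma code_distinct_iff: "code_distinct c \<longleftrightarrow> distinct (map entry_pos (list_decode c))"
proof -
  let ?l = "list_decode c"
  have "code_distinct c \<longleftrightarrow> (\<forall>t<length ?l. \<forall>t'<t. entry_pos (?l ! t') \<noteq> entry_pos (?l ! t))"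
    unfolding code_distinct_def code_all_entries
    by (auto simp: code_nth_eq_nth same_pos_iff)
  also have "\<dots> \<longleftrightarrow> distinct (map entry_pos ?l)"
    unfolding distinct_conv_nth by (auto, metis linorder_neqE_nat)
  finally show ?thesis .
qed

lemma pattern_of_distinct_code:
  assumes "code_distinct c"
  shows "pattern_of_code c k = Some v \<longleftrightarrow>
    (\<exists>t<length (list_decode c). decode_entry (list_decode c ! t) = (k, v))"
proof -
  have "distinct (map fst (map decode_entry (list_decode c)))"
    using assms by (simp add: code_distinct_iff comp_def decode_entry_eq)
  hence "pattern_of_code c k = Some v \<longleftrightarrow> (k, v) \<in> set (map decode_entry (list_decode c))"
    unfolding pattern_of_code_def by (rule map_of_eq_Some_iff)
  thus ?thesis by (metis in_set_conv_nth length_map nth_map)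
qed

lemma distinct_code_exists:
  assumes "finite (dom R)"
  shows "\<exists>c. code_distinct c \<and> pattern_of_code c = R"
proof -
  obtain ps where ps: "set ps = dom R" "distinct ps" using finite_distinct_list[OF assms] by blast
  define enc where "enc p = prod_encode (int_encode (fst p), prod_encode (int_encode (snd p), the (R p)))" for p
  have dec: "decode_entry (enc p) = (p, the (R p))" for p
    by (simp add: enc_def decode_entry_def)
  define c where "c = list_encode (map enc ps)"
  have "map decode_entry (list_decode c) = map (\<lambda>p. (p, the (R p))) ps"
    by (simp add: c_def dec)
  moreover have "map_of (map (\<lambda>p. (p, the (R p))) ps) = R"
    using ps by (force simp: map_of_map_restrict restrict_map_def)
  ultimately have "pattern_of_code c = R" by (simp add: pattern_of_code_def)
  moreover have "distinct (map entry_pos (list_decode c))"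
    using ps(2) dec by (simp add: c_def comp_def decode_entry_eq)
  ultimately show ?thesis by (auto simp: code_distinct_iff)
qed

text \<open>The three conditions of a limit witness, expressed on codes with quantifiers
  bounded by the codes.\<close>

definition code_sub :: "nat \<Rightarrow> nat \<Rightarrow> bool" where
  "code_sub x c \<longleftrightarrow> (\<forall>i. i < x \<longrightarrow> code_drop i x \<noteq> 0 \<longrightarrow>
     (\<exists>j. j < i \<and> same_pos (code_nth x j) (code_nth x i)) \<or>
     (\<exists>t. t < c \<and> code_drop t c \<noteq> 0 \<and> code_nth c t = code_nth x i))"

definition code_agree_box :: "nat \<Rightarrow> nat \<Rightarrow> nat \<Rightarrow> bool" where
  "code_agree_box n c1 c2 \<longleftrightarrow> (\<forall>a. a < n \<longrightarrow> (\<forall>b. b < n \<longrightarrow>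
     (\<exists>t. t < c1 \<and> (\<exists>t2. t2 < c2 \<and> code_drop t c1 \<noteq> 0 \<and> code_drop t2 c2 \<noteq> 0 \<and>
        entry_x (code_nth c1 t) = a \<and> entry_y (code_nth c1 t) = b \<and> code_nth c1 t = code_nth c2 t2))))"

definition code_differ :: "nat \<Rightarrow> nat \<Rightarrow> bool" where
  "code_differ c1 c2 \<longleftrightarrow> (\<exists>t. t < c1 \<and> (\<exists>t2. t2 < c2 \<and> code_drop t c1 \<noteq> 0 \<and> code_drop t2 c2 \<noteq> 0 \<and>
     same_pos (code_nth c1 t) (code_nth c2 t2) \<and> entry_sym (code_nth c1 t) \<noteq> entry_sym (code_nth c2 t2)))"

lemma code_ex_entry_pair:
  "(\<exists>t. t < c1 \<and> (\<exists>t2. t2 < c2 \<and> code_drop t c1 \<noteq> 0 \<and> code_drop t2 c2 \<noteq> 0 \<and> Q t t2)) \<longleftrightarrow>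
   (\<exists>t<length (list_decode c1). \<exists>t2<length (list_decode c2). Q t t2)"
  using length_list_decode_le[of c1] length_list_decode_le[of c2]
    code_drop_nonzero[of _ c1] code_drop_nonzero[of _ c2] by (meson less_le_trans)

lemma code_sub_iff:
  assumes "code_distinct c"
  shows "code_sub x c \<longleftrightarrow> pattern_of_code x \<subseteq>\<^sub>m pattern_of_code c"
proof -
  let ?lx = "list_decode x" and ?l = "list_decode c"
  have "code_sub x c \<longleftrightarrow> (\<forall>i<length ?lx. (\<exists>j<i. same_pos (code_nth x j) (code_nth x i)) \<or>
      (\<exists>t<length ?l. code_nth c t = code_nth x i))"
    unfolding code_sub_def code_all_entries[symmetric] code_ex_entry by blast
  also have "\<dots> \<longleftrightarrow> (\<forall>i<length ?lx. (\<exists>j<i. entry_pos (?lx ! j) = entry_pos (?lx ! i)) \<or> ?lx ! i \<in> set ?l)"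
    by (intro all_cong1 imp_cong refl) (auto simp: code_nth_eq_nth same_pos_iff in_set_conv_nth)
  also have "\<dots> \<longleftrightarrow>
      (\<forall>i<length ?lx. (\<forall>j<i. entry_pos (?lx ! j) \<noteq> entry_pos (?lx ! i)) \<longrightarrow> ?lx ! i \<in> set ?l)"
    by blast
  also have "\<dots> \<longleftrightarrow> (\<forall>k v. pattern_of_code x k = Some v \<longrightarrow> pattern_of_code c k = Some v)"
  proof (intro iffI allI impI)
    fix k v
    assume H: "\<forall>i<length ?lx. (\<forall>j<i. entry_pos (?lx ! j) \<noteq> entry_pos (?lx ! i)) \<longrightarrow> ?lx ! i \<in> set ?l"
      and "pattern_of_code x k = Some v"
    then obtain i where i: "i < length ?lx" "decode_entry (?lx ! i) = (k, v)"
      "\<forall>j<i. entry_pos (?lx ! j) \<noteq> k"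
      unfolding pattern_of_code_first by blast
    hence "?lx ! i \<in> set ?l" using H by (simp add: decode_entry_eq)
    thus "pattern_of_code c k = Some v"
      using i(2) pattern_of_distinct_code[OF assms] by (metis in_set_conv_nth)
  next
    fix i
    assume H: "\<forall>k v. pattern_of_code x k = Some v \<longrightarrow> pattern_of_code c k = Some v"
      and i: "i < length ?lx" "\<forall>j<i. entry_pos (?lx ! j) \<noteq> entry_pos (?lx ! i)"
    have "pattern_of_code x (entry_pos (?lx ! i)) = Some (entry_sym (?lx ! i))"
      using i unfolding pattern_of_code_first by (auto simp: decode_entry_eq)
    then obtain t where "t < length ?l" "decode_entry (?l ! t) = decode_entry (?lx ! i)"
      using H pattern_of_distinct_code[OF assms] by (metis decode_entry_eq)
    thus "?lx ! i \<in> set ?l" by (metis decode_entry_inj nth_mem)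
  qed
  also have "\<dots> \<longleftrightarrow> pattern_of_code x \<subseteq>\<^sub>m pattern_of_code c"
    unfolding map_le_def by (metis domD domI)
  finally show ?thesis .
qed

lemma common_binding_iff:
  assumes "code_distinct c1" "code_distinct c2"
  shows "(\<exists>v. pattern_of_code c1 p = Some v \<and> pattern_of_code c2 p = Some v) \<longleftrightarrow>
    (\<exists>t<length (list_decode c1). \<exists>t2<length (list_decode c2).
       entry_pos (list_decode c1 ! t) = p \<and> list_decode c1 ! t = list_decode c2 ! t2)"
  (is "?L \<longleftrightarrow> (\<exists>t<length ?l1. \<exists>t2<length ?l2. _)")
proof
  assume ?L
  then obtain v t t2 where t: "t < length ?l1" "decode_entry (?l1 ! t) = (p, v)"
    and t2: "t2 < length ?l2" "decode_entry (?l2 ! t2) = (p, v)"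
    unfolding pattern_of_distinct_code[OF assms(1)] pattern_of_distinct_code[OF assms(2)] by blast
  have "entry_pos (?l1 ! t) = p" using t(2) by (simp add: decode_entry_eq)
  moreover have "?l1 ! t = ?l2 ! t2" using t(2) t2(2) decode_entry_inj by metis
  ultimately show "\<exists>t<length ?l1. \<exists>t2<length ?l2. entry_pos (?l1 ! t) = p \<and> ?l1 ! t = ?l2 ! t2"
    using t(1) t2(1) by blast
next
  assume "\<exists>t<length ?l1. \<exists>t2<length ?l2. entry_pos (?l1 ! t) = p \<and> ?l1 ! t = ?l2 ! t2"
  then obtain t t2 where t: "t < length ?l1" "t2 < length ?l2"
    and pos: "entry_pos (?l1 ! t) = p" and eq: "?l1 ! t = ?l2 ! t2" by blast
  have "decode_entry (?l1 ! t) = (p, entry_sym (?l1 ! t))" "decode_entry (?l2 ! t2) = (p, entry_sym (?l1 ! t))"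
    using pos eq by (simp_all add: decode_entry_eq)
  thus ?L using t
    unfolding pattern_of_distinct_code[OF assms(1)] pattern_of_distinct_code[OF assms(2)] by blast
qed

lemma code_agree_box_iff:
  assumes "code_distinct c1" "code_distinct c2"
  shows "code_agree_box n c1 c2 \<longleftrightarrow>
    (\<forall>p\<in>pos_box n. \<exists>v. pattern_of_code c1 p = Some v \<and> pattern_of_code c2 p = Some v)"
proof -
  let ?l1 = "list_decode c1" and ?l2 = "list_decode c2"
  have "code_agree_box n c1 c2 \<longleftrightarrow> (\<forall>a<n. \<forall>b<n. \<exists>t<length ?l1. \<exists>t2<length ?l2.
      entry_x (?l1 ! t) = a \<and> entry_y (?l1 ! t) = b \<and> ?l1 ! t = ?l2 ! t2)"
    unfolding code_agree_box_def code_ex_entry_pair by (simp add: code_nth_eq_nth cong: conj_cong)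
  also have "\<dots> \<longleftrightarrow> (\<forall>a<n. \<forall>b<n. \<exists>t<length ?l1. \<exists>t2<length ?l2.
      entry_pos (?l1 ! t) = (int_decode a, int_decode b) \<and> ?l1 ! t = ?l2 ! t2)"
    by (simp add: entry_pos_def int_decode_eq)
  finally show ?thesis unfolding ball_pos_box common_binding_iff[OF assms] .
qed

lemma code_differ_iff:
  assumes "code_distinct c1" "code_distinct c2"
  shows "code_differ c1 c2 \<longleftrightarrow>
    (\<exists>p v1 v2. pattern_of_code c1 p = Some v1 \<and> pattern_of_code c2 p = Some v2 \<and> v1 \<noteq> v2)"
proof -
  let ?l1 = "list_decode c1" and ?l2 = "list_decode c2"
  have "code_differ c1 c2 \<longleftrightarrow> (\<exists>t<length ?l1. \<exists>t2<length ?l2.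
      entry_pos (?l1 ! t) = entry_pos (?l2 ! t2) \<and> entry_sym (?l1 ! t) \<noteq> entry_sym (?l2 ! t2))"
    unfolding code_differ_def code_ex_entry_pair
    by (simp add: code_nth_eq_nth same_pos_iff cong: conj_cong)
  also have "\<dots> \<longleftrightarrow> (\<exists>p v1 v2. pattern_of_code c1 p = Some v1 \<and> pattern_of_code c2 p = Some v2 \<and> v1 \<noteq> v2)"
    unfolding pattern_of_distinct_code[OF assms(1)] pattern_of_distinct_code[OF assms(2)]
    by (auto simp: decode_entry_eq; metis prod.collapse)
  finally show ?thesis .
qed

definition witness_code :: "nat \<Rightarrow> nat \<Rightarrow> nat \<Rightarrow> nat \<Rightarrow> bool" where
  "witness_code x n c1 c2 \<longleftrightarrow> code_distinct c1 \<and> code_distinct c2 \<and>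
     code_sub x c1 \<and> code_agree_box n c1 c2 \<and> code_differ c1 c2"

lemma witness_code_iff:
  "witness_code x n c1 c2 \<longleftrightarrow> code_distinct c1 \<and> code_distinct c2 \<and>
     limit_witness (pattern_of_code x) n (pattern_of_code c1) (pattern_of_code c2)"
  unfolding witness_code_def limit_witness_def
  by (simp add: code_sub_iff code_agree_box_iff code_differ_iff cong: conj_cong)

lemma PRP_witness_code:
  "PRP 3 (\<lambda>e. witness_code (e 0) (e 1) (fst (prod_decode (e 2))) (snd (prod_decode (e 2))))"
  unfolding witness_code_def code_distinct_def code_sub_def code_agree_box_def code_differ_def
    same_pos_def numeral_3_eq_3
  by (intro PRP_and PRP_or PRP_not PRP_imp PRP_all PRP_ex PRP_eq PRP_less PRe_code_nth PRe_code_drop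
      PRe_entry_x PRe_entry_y PRe_entry_sym PRe_prod_decode PRe_var PRe_zero; simp)



lemma derived_iff_codes:
  assumes "subshift S X"
  shows "occurs_in_shift (pattern_of_code x) (derived X) \<longleftrightarrow>
    (\<forall>n. \<exists>c1 c2. witness_code x n c1 c2 \<and>
       pattern_of_code c1 \<in> language X \<and> pattern_of_code c2 \<in> language X)"
  unfolding derived_iff_witnesses[OF assms is_pattern_of_code] witness_code_iff
proof (intro all_cong1 iffI)
  fix n
  assume "\<exists>R1\<in>language X. \<exists>R2\<in>language X. limit_witness (pattern_of_code x) n R1 R2"
  then obtain R1 R2 where R: "R1 \<in> language X" "R2 \<in> language X"
    "limit_witness (pattern_of_code x) n R1 R2" by blast
  obtain c1 c2 where "code_distinct c1" "pattern_of_code c1 = R1" "code_distinct c2" "pattern_of_code c2 = R2"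
    using distinct_code_exists R(1,2) unfolding language_def is_pattern_def by (metis mem_Collect_eq)
  thus "\<exists>c1 c2. (code_distinct c1 \<and> code_distinct c2 \<and>
      limit_witness (pattern_of_code x) n (pattern_of_code c1) (pattern_of_code c2)) \<and>
      pattern_of_code c1 \<in> language X \<and> pattern_of_code c2 \<in> language X"
    using R by blast
qed blast

lemma alt_quant_cong:
  "(\<And>zs. length zs = length ys + k \<Longrightarrow> take (length ys) zs = ys \<Longrightarrow> R zs = R' zs) \<Longrightarrow>
   alt_quant b k R ys = alt_quant b k R' ys"
proof (induction k arbitrary: b ys)
  case (Suc k)
  have "alt_quant b' k R (ys @ [y]) = alt_quant b' k R' (ys @ [y])" for b' y
  proof (rule Suc.IH)
    fix zs assume zs: "length zs = length (ys @ [y]) + k" "take (length (ys @ [y])) zs = ys @ [y]"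
    have "take (length ys) zs = ys"
      using zs(2) by (metis append_eq_conv_conj length_append_singleton take_take le_Suc_eq min_def)
    thus "R zs = R' zs" using zs(1) Suc.prems by simp
  qed
  thus ?case by (cases b) simp_all
qed simp

lemma alt_quant_const:
  "alt_quant b k (\<lambda>zs. C \<and> R zs) ys = (C \<and> alt_quant b k R ys)"
  by (induction k arbitrary: b ys) (simp, case_tac b, auto)

text \<open>Contraction of quantifier blocks: when every quantified variable is read as a pair,
  the first components feeding one matrix and the second components another, the prefix
  splits into two independent prefixes.  (Universal quantifiers distribute over conjunction;
  for existential ones the two witnesses are paired.)\<close>
lemma alt_quant_pair:
  assumes "m \<le> length ys"
  shows "alt_quant b k (\<lambda>zs. RA (map (\<lambda>y. fst (prod_decode y)) (drop m zs)) \<and>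
                            RB (map (\<lambda>y. snd (prod_decode y)) (drop m zs))) ys
       = (alt_quant b k RA (map (\<lambda>y. fst (prod_decode y)) (drop m ys)) \<and>
          alt_quant b k RB (map (\<lambda>y. snd (prod_decode y)) (drop m ys)))"
  using assms
proof (induction k arbitrary: b ys)
  case (Suc k)
  let ?A = "\<lambda>y. alt_quant (\<not> b) k RA (map (\<lambda>y. fst (prod_decode y)) (drop m ys) @ [y])"
  let ?B = "\<lambda>y. alt_quant (\<not> b) k RB (map (\<lambda>y. snd (prod_decode y)) (drop m ys) @ [y])"
  have IH: "alt_quant b' k (\<lambda>zs. RA (map (\<lambda>y. fst (prod_decode y)) (drop m zs)) \<and>
                            RB (map (\<lambda>y. snd (prod_decode y)) (drop m zs))) (ys @ [y])
     = (alt_quant b' k RA (map (\<lambda>y. fst (prod_decode y)) (drop m ys) @ [fst (prod_decode y)]) \<and>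
        alt_quant b' k RB (map (\<lambda>y. snd (prod_decode y)) (drop m ys) @ [snd (prod_decode y)]))" for b' y
    using Suc.IH[of "ys @ [y]" b'] Suc.prems by simp
  show ?case
  proof (cases b)
    case True
    have "(\<forall>y. ?A (fst (prod_decode y)) \<and> ?B (snd (prod_decode y))) \<longleftrightarrow> (\<forall>y. ?A y) \<and> (\<forall>y. ?B y)"
      by (metis fst_conv snd_conv prod_encode_inverse)
    thus ?thesis using True by (simp add: IH)
  next
    case False
    have "(\<exists>y. ?A (fst (prod_decode y)) \<and> ?B (snd (prod_decode y))) \<longleftrightarrow> (\<exists>y. ?A y) \<and> (\<exists>y. ?B y)"
      by (metis fst_conv snd_conv prod_encode_inverse)
    thus ?thesis using False by (simp add: IH)
  qed
qed simp

lemma alt_quant_pair_matrix: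
  "alt_quant True k (\<lambda>zs. Q (zs ! 0) (zs ! 1) (zs ! 2) \<and>
      R (map (\<lambda>j. fst (prod_decode (zs ! (j + 2)))) [0..<Suc k]) \<and>
      R (map (\<lambda>j. snd (prod_decode (zs ! (j + 2)))) [0..<Suc k])) [x, n, w]
   \<longleftrightarrow> Q x n w \<and> alt_quant True k R [fst (prod_decode w)] \<and> alt_quant True k R [snd (prod_decode w)]"
proof -
  have "alt_quant True k (\<lambda>zs. Q (zs ! 0) (zs ! 1) (zs ! 2) \<and>
      R (map (\<lambda>j. fst (prod_decode (zs ! (j + 2)))) [0..<Suc k]) \<and>
      R (map (\<lambda>j. snd (prod_decode (zs ! (j + 2)))) [0..<Suc k])) [x, n, w]
    = alt_quant True k (\<lambda>zs. Q x n w \<and> (R (map (\<lambda>y. fst (prod_decode y)) (drop 2 zs)) \<and>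
      R (map (\<lambda>y. snd (prod_decode y)) (drop 2 zs)))) [x, n, w]"
  proof (rule alt_quant_cong)
    fix zs :: "nat list"
    assume len: "length zs = length [x, n, w] + k" and pre: "take (length [x, n, w]) zs = [x, n, w]"
    define r where "r = drop 3 zs"
    have "zs = x # n # w # r" "length r = k"
      using pre append_take_drop_id[of 3 zs] len by (simp_all add: r_def numeral_3_eq_3)
    note zs = this
    have "map (\<lambda>j. h (zs ! (j + 2))) [0..<Suc k] = map h (drop 2 zs)" for h :: "nat \<Rightarrow> nat"
      using len by (intro nth_equalityI) (simp_all add: add.commute del: upt_Suc)
    note split = this[of "\<lambda>y. fst (prod_decode y)"] this[of "\<lambda>y. snd (prod_decode y)"]
    show "(Q (zs ! 0) (zs ! 1) (zs ! 2) \<and>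
      R (map (\<lambda>j. fst (prod_decode (zs ! (j + 2)))) [0..<Suc k]) \<and>
      R (map (\<lambda>j. snd (prod_decode (zs ! (j + 2)))) [0..<Suc k])) =
      (Q x n w \<and> (R (map (\<lambda>y. fst (prod_decode y)) (drop 2 zs)) \<and>
      R (map (\<lambda>y. snd (prod_decode y)) (drop 2 zs))))"
      by (simp only: split) (simp add: zs)
  qed
  also have "\<dots> \<longleftrightarrow> Q x n w \<and> alt_quant True k R [fst (prod_decode w)] \<and> alt_quant True k R [snd (prod_decode w)]"
    by (simp add: alt_quant_const alt_quant_pair)
  finally show ?thesis .
qed

lemma Pi0_forall_exists_pair:
  assumes A: "Pi0 k A"
    and C: "PRP 3 (\<lambda>e. C (e 0) (e 1) (fst (prod_decode (e 2))) (snd (prod_decode (e 2))))"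
  shows "Pi0 (k + 2) {x. \<forall>n. \<exists>c1 c2. C x n c1 c2 \<and> c1 \<in> A \<and> c2 \<in> A}"
proof -
  obtain f where f: "PR (Suc k) f" and fA: "\<And>c. c \<in> A \<longleftrightarrow> alt_quant True k (\<lambda>ys. f ys \<noteq> 0) [c]"
    using A unfolding Pi0_def by blast
  define half where "half h e = f (map (\<lambda>j. h (prod_decode (e (j + 2)))) [0..<Suc k])"
    for h :: "nat \<times> nat \<Rightarrow> nat" and e :: "nat \<Rightarrow> nat"
  define M where "M e = (if C (e 0) (e 1) (fst (prod_decode (e 2))) (snd (prod_decode (e 2)))
    then 1 else 0) * half fst e * half snd e" for e
  have half: "PRe (Suc (Suc (Suc k))) (half h)"
    if h: "\<And>a. PRe (Suc (Suc (Suc k))) a \<Longrightarrow> PRe (Suc (Suc (Suc k))) (\<lambda>e. h (prod_decode (a e)))" for h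
  proof -
    have "PRe (Suc (Suc (Suc k))) (\<lambda>e. f (map (\<lambda>g. g e) (map (\<lambda>j e. h (prod_decode (e (j + 2)))) [0..<Suc k])))"
      by (rule PRe_comp_list[OF PR_PRf[OF f]]) (auto intro!: h PRe_var)
    thus ?thesis unfolding half_def[abs_def] map_map comp_def .
  qed
  note half[of fst, OF PRe_prod_decode(1)] half[of snd, OF PRe_prod_decode(2)]
  moreover have "PRe (Suc (Suc (Suc k))) (\<lambda>e. if C (e 0) (e 1) (fst (prod_decode (e 2))) (snd (prod_decode (e 2))) then 1 else 0)"
    using PRe_weaken C unfolding PRP_def by (simp add: numeral_3_eq_3)
  ultimately have "PRe (Suc (Suc (Suc k))) M" unfolding M_def by (intro PRe_mult)
  then obtain g where g: "PR (Suc (Suc (Suc k))) g"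
    and gM: "\<And>zs. length zs = Suc (Suc (Suc k)) \<Longrightarrow> g zs = M (nth zs)"
    unfolding PRe_def PRf_def by blast
  have matrix: "M (nth zs) \<noteq> 0 \<longleftrightarrow>
      C (zs ! 0) (zs ! 1) (fst (prod_decode (zs ! 2))) (snd (prod_decode (zs ! 2))) \<and>
      f (map (\<lambda>j. fst (prod_decode (zs ! (j + 2)))) [0..<Suc k]) \<noteq> 0 \<and>
      f (map (\<lambda>j. snd (prod_decode (zs ! (j + 2)))) [0..<Suc k]) \<noteq> 0" for zs
    by (simp add: M_def half_def del: upt_Suc)
  have "alt_quant True (k + 2) (\<lambda>ys. g ys \<noteq> 0) [x] \<longleftrightarrow>
    (\<forall>n. \<exists>c1 c2. C x n c1 c2 \<and> c1 \<in> A \<and> c2 \<in> A)" for x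
  proof -
    have "alt_quant True (k + 2) (\<lambda>ys. g ys \<noteq> 0) [x] = alt_quant True (k + 2) (\<lambda>zs. M (nth zs) \<noteq> 0) [x]"
      by (rule alt_quant_cong) (simp add: gM)
    also have "\<dots> \<longleftrightarrow> (\<forall>n. \<exists>w. alt_quant True k (\<lambda>zs. M (nth zs) \<noteq> 0) [x, n, w])"
      by (simp add: numeral_2_eq_2)
    also have "\<dots> \<longleftrightarrow> (\<forall>n. \<exists>w. C x n (fst (prod_decode w)) (snd (prod_decode w)) \<and>
        fst (prod_decode w) \<in> A \<and> snd (prod_decode w) \<in> A)"
      by (simp only: matrix fA alt_quant_pair_matrix[where R = "\<lambda>ys. f ys \<noteq> 0"
            and Q = "\<lambda>x n w. C x n (fst (prod_decode w)) (snd (prod_decode w))"])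
    also have "\<dots> \<longleftrightarrow> (\<forall>n. \<exists>c1 c2. C x n c1 c2 \<and> c1 \<in> A \<and> c2 \<in> A)"
      by (metis fst_conv snd_conv prod_encode_inverse)
    finally show ?thesis .
  qed
  with g show ?thesis unfolding Pi0_def by (intro exI[of _ g]) simp
qed

text \<open>The language, read through the coding of patterns, is a Pi^0_k set
  of codes; instantiating the general bound with the primitive recursive witness relation
  gives the claim.\<close>
theorem lemma9:
  fixes S :: "nat set" and X :: "config set" and k :: nat
  assumes "k \<ge> 1"
    and "subshift S X"
    and "Pi0_patterns k (language X)"
  shows "Pi0_patterns (k + 2) {P. is_pattern P \<and> occurs_in_shift P (derived X)}"
proof -
  let ?L = "{c. pattern_of_code c \<in> language X}"
  have "Pi0 (k + 2) {x. \<forall>n. \<exists>c1 c2. witness_code x n c1 c2 \<and> c1 \<in> ?L \<and> c2 \<in> ?L}"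
    using assms(3) PRP_witness_code unfolding Pi0_patterns_def by (rule Pi0_forall_exists_pair)
  moreover have "{x. \<forall>n. \<exists>c1 c2. witness_code x n c1 c2 \<and> c1 \<in> ?L \<and> c2 \<in> ?L} =
      {x. pattern_of_code x \<in> {P. is_pattern P \<and> occurs_in_shift P (derived X)}}"
    using derived_iff_codes[OF assms(2)] is_pattern_of_code by auto
  ultimately show ?thesis unfolding Pi0_patterns_def by simp
qed

end
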